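(* Let $\chi$ be a countable set and let $B \ge 1$ be an integer. Let $s:\{1,2,\dots,B\} \to (0,\infty)$ be an injective function. Then there exists a function $f:\chi\to\mathbb{R}$ such that the map $$h(X) = s(|X|)\cdot \frac{1}{|X|}\sum_{x \in X} f(x)$$ (the sum taken with multiplicity) is injective on the set of all nonempty finite multisets $X$ of elements of $\chi$ with $|X| \le B$.
   Context: $|X|$ denotes the cardinality of the multiset $X$ counted with multiplicity (the neighbourhood size / node degree). The map $h$ is the mean aggregator of $f$ composed with the degree-scaler $s$; the positivity assumption on $s$ can always be achieved from an arbitrary injective scaler by adding a constant (an affine shift), which preserves injectivity. The special case $s(d)=d$ gives the sum aggregator $\sum_{x\in X} f(x)$. *)

theory Defs
  imports "HOL-Analysis.Analysis" "HOL-Library.Multiset"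
begin

definition scaled_mean_agg :: "(nat \<Rightarrow> real) \<Rightarrow> ('a \<Rightarrow> real) \<Rightarrow> 'a multiset \<Rightarrow> real" where
  "scaled_mean_agg s f X = s (size X) * (1 / real (size X)) * (\<Sum>x\<in>#X. f x)"

end

theory Submission
  imports Defs "HOL-Computational_Algebra.Polynomial"
begin

text \<open>Number the elements of \<open>\<chi>\<close> by naturals and put \<open>f x = r ^ (index of x)\<close>. Then
  \<open>\<Sum>\<^sub>x\<^sub>\<in>\<^sub>X f x\<close> is the value at \<open>r\<close> of the generating polynomial \<open>\<Sum>\<^sub>k\<^sub>\<in>\<^sub>M t ^ k\<close> of the
  multiset \<open>M\<close> of indices, so \<open>h X = h Y\<close> makes \<open>r\<close> a root of
  \<open>(s |X| / |X|) Q\<^sub>M - (s |Y| / |Y|) Q\<^sub>N\<close>. Evaluating at \<open>t = 1\<close> gives \<open>s |X| - s |Y|\<close>, so by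
  injectivity of \<open>s\<close> this polynomial vanishes only if \<open>|X| = |Y|\<close> and then \<open>M = N\<close>.
  There are countably many such nonzero polynomials, hence countably many roots,
  and any real \<open>r\<close> outside them works.\<close>

definition mset_poly :: "nat multiset \<Rightarrow> real poly" where
  "mset_poly M = (\<Sum>k\<in>#M. monom 1 k)"

lemma poly_mset_poly: "poly (mset_poly M) x = (\<Sum>k\<in>#M. x ^ k)"
  unfolding mset_poly_def by (induction M) (auto simp: poly_monom)

lemma coeff_mset_poly: "coeff (mset_poly M) k = real (count M k)"
  unfolding mset_poly_def by (induction M) auto

lemma poly_mset_poly_1: "poly (mset_poly M) 1 = real (size M)"
  unfolding poly_mset_poly by (induction M) auto

lemma smult_mset_poly_eqD:
  assumes eq: "smult (c (size M)) (mset_poly M) = smult (c (size N)) (mset_poly N)"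
    and inj: "inj_on (\<lambda>d. c d * real d) A"
    and nz: "\<And>d. d \<in> A \<Longrightarrow> c d \<noteq> 0"
    and sizes: "size M \<in> A" "size N \<in> A"
  shows "M = N"
proof -
  from arg_cong[OF eq, of "\<lambda>p. poly p 1"]
  have "c (size M) * real (size M) = c (size N) * real (size N)"
    by (simp add: poly_mset_poly_1)
  with inj sizes have same_size: "size M = size N"
    by (auto dest: inj_onD)
  have "count M k = count N k" for k
    using arg_cong[OF eq, of "\<lambda>p. coeff p k"] nz[OF sizes(1)]
    by (simp add: coeff_mset_poly same_size)
  then show ?thesis
    by (simp add: multiset_eq_iff)
qed

lemma countable_UNIV_multiset: "countable (UNIV :: 'a::countable multiset set)"
proof -
  have "(UNIV :: 'a multiset set) = range mset"
    by (metis ex_mset surj_def)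
  then show ?thesis
    by (metis countableI_type countable_image)
qed

lemma avoid_roots_of_countable_polys:
  assumes "countable P" "0 \<notin> P"
  shows "\<exists>r::real. \<forall>p\<in>P. poly p r \<noteq> 0"
proof -
  define Z where "Z = (\<Union>p\<in>P. {x::real. poly p x = 0})"
  have "countable Z"
    unfolding Z_def using assms(2)
    by (intro countable_UN[OF assms(1)] countable_finite poly_roots_finite) auto
  with uncountable_UNIV_real obtain r where "r \<notin> Z"
    by (metis UNIV_eq_I)
  then show ?thesis
    unfolding Z_def by blast
qed

lemma inj_on_scaled_power_sum:
  assumes inj: "inj_on (\<lambda>d. c d * real d) A"
    and nz: "\<And>d. d \<in> A \<Longrightarrow> c d \<noteq> 0"
  shows "\<exists>r::real. inj_on (\<lambda>M. c (size M) * (\<Sum>k\<in>#M. r ^ k)) {M. size M \<in> A}"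
proof -
  define D where "D M N = smult (c (size M)) (mset_poly M) - smult (c (size N)) (mset_poly N)"
    for M N
  define P where "P = (\<lambda>(M, N). D M N) ` {(M, N). M \<noteq> N \<and> size M \<in> A \<and> size N \<in> A}"
  have D_nonzero: "D M N \<noteq> 0" if "M \<noteq> N" "size M \<in> A" "size N \<in> A" for M N
  proof
    assume "D M N = 0"
    then have "smult (c (size M)) (mset_poly M) = smult (c (size N)) (mset_poly N)"
      by (simp add: D_def)
    with smult_mset_poly_eqD[OF _ inj nz that(2,3)] that(1) show False
      by blast
  qed
  have "countable (UNIV \<times> UNIV :: (nat multiset \<times> nat multiset) set)"
    by (intro countable_SIGMA countable_UNIV_multiset)
  then have "countable P"
    unfolding P_def by (rule countable_image[OF countable_subset, rotated]) auto
  moreover have "0 \<notin> P"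
    unfolding P_def using D_nonzero by fastforce
  ultimately obtain r where r: "\<forall>p\<in>P. poly p r \<noteq> 0"
    using avoid_roots_of_countable_polys by blast
  have "M = N" if "size M \<in> A" "size N \<in> A"
    and "c (size M) * (\<Sum>k\<in>#M. r ^ k) = c (size N) * (\<Sum>k\<in>#N. r ^ k)" for M N
  proof (rule ccontr)
    assume "M \<noteq> N"
    with that(1,2) have "D M N \<in> P"
      unfolding P_def by blast
    moreover have "poly (D M N) r = 0"
      using that(3) by (simp add: D_def poly_mset_poly)
    ultimately show False
      using r by blast
  qed
  then show ?thesis
    by (intro exI inj_onI) auto
qed

lemma inj_on_image_mset:
  assumes "inj_on f S"
  shows "inj_on (image_mset f) {X. set_mset X \<subseteq> S}"
proof (rule inj_onI)
  fix X Y
  assume "X \<in> {X. set_mset X \<subseteq> S}" "Y \<in> {X. set_mset X \<subseteq> S}"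
    and eq: "image_mset f X = image_mset f Y"
  then have "inj_on f (set_mset X \<union> set_mset Y)"
    using assms by (auto intro: inj_on_subset)
  with image_mset_eq_image_mset_plusD[of f X Y 0] eq show "X = Y"
    by auto
qed

theorem theorem2:
  fixes Chi :: "'a set" and B :: nat and s :: "nat \<Rightarrow> real"
  assumes "countable Chi"
    and "B \<ge> 1"
    and "\<And>d. d \<in> {1..B} \<Longrightarrow> s d > 0"
    and "inj_on s {1..B}"
  shows "\<exists>f :: 'a \<Rightarrow> real.
           inj_on (scaled_mean_agg s f)
             {X :: 'a multiset. set_mset X \<subseteq> Chi \<and> X \<noteq> {#} \<and> size X \<le> B}"
proof -
  define c where "c d = s d * (1 / real d)" for d
  have "inj_on (\<lambda>d. c d * real d) {1..B}"
    using assms(4) by (auto simp: c_def intro: inj_on_cong[THEN iffD1])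
  moreover have "\<And>d. d \<in> {1..B} \<Longrightarrow> c d \<noteq> 0"
    using assms(3) by (fastforce simp: c_def)
  ultimately obtain r :: real
    where r: "inj_on (\<lambda>M. c (size M) * (\<Sum>k\<in>#M. r ^ k)) {M. size M \<in> {1..B}}"
    using inj_on_scaled_power_sum by blast
  define g where "g = to_nat_on Chi"
  have g: "inj_on (image_mset g) {X. set_mset X \<subseteq> Chi}"
    unfolding g_def using assms(1) by (intro inj_on_image_mset inj_on_to_nat_on)
  define f where "f x = r ^ g x" for x
  have "scaled_mean_agg s f X = c (size (image_mset g X)) * (\<Sum>k\<in>#image_mset g X. r ^ k)" for X
    by (simp add: scaled_mean_agg_def c_def f_def image_mset.compositionality o_def)
  then have agg: "scaled_mean_agg s f = (\<lambda>M. c (size M) * (\<Sum>k\<in>#M. r ^ k)) \<circ> image_mset g"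
    by auto
  define S where "S = {X. set_mset X \<subseteq> Chi \<and> X \<noteq> {#} \<and> size X \<le> B}"
  have "inj_on (image_mset g) S"
    by (rule inj_on_subset[OF g]) (auto simp: S_def)
  moreover have "inj_on (\<lambda>M. c (size M) * (\<Sum>k\<in>#M. r ^ k)) (image_mset g ` S)"
    by (rule inj_on_subset[OF r]) (auto simp: S_def Suc_le_eq nonempty_has_size)
  ultimately have "inj_on (scaled_mean_agg s f) S"
    unfolding agg by (rule comp_inj_on)
  then show ?thesis
    unfolding S_def by (rule exI[of _ f])
qed

end
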